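(* For any integer $n \geq 2$ and any integer $m \geq n$ there are $n+1$ translates $A_0, A_1, \dots, A_n$ of the set $D_n^m$ (defined below) whose interiors are pairwise disjoint, but such that $A_0$ touches every $A_i$ for $1 \leq i \leq n$ (i.e. $A_0 \cap A_i \neq \emptyset$). In particular, for every $n > 0$ there is a planar topological disk $A_0$ and $n$ translates $A_1,\dots,A_n$ of it such that $A_0,\dots,A_n$ have pairwise disjoint interiors and each $A_i$ ($1\le i\le n$) touches $A_0$.
   Context: Let $s_1, s_2, \dots$ be the sequence with $s_i = 1 + \nu_2(i)$, where $\nu_2(i)$ is the exponent of $2$ in the prime factorization of $i$ (so $s_i$ is the position, counted from the right, of the lowest $1$ bit of $i$ in binary; the sequence begins $1,2,1,3,1,2,1,4,\dots$). For $i \geq 1$ put $y_i = \sum_{j=1}^{i-1} s_j$ (so $y_1 = 0$). For integers $m \geq 2$, $n \geq 1$, define the bars $B_i = [(i-1)m,\, im] \times [y_i,\, y_i + 1]$ for $1 \leq i \leq 2^n$, and the connectors $V_i = [im-1,\, im] \times [y_i + 1,\, y_{i+1} + 1]$ for $1 \leq i \leq 2^n - 1$. Define $D_n^m = \bigcup_{i=1}^{2^n} B_i \cup \bigcup_{i=1}^{2^n-1} V_i \subset \mathbb{R}^2$; this is a topological disk (Jordan region). Two sets touch if they intersect; here the touching translates have disjoint interiors. *)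

theory Defs
  imports "HOL-Analysis.Analysis" "HOL-Computational_Algebra.Primes"
begin

definition sseq :: "nat \<Rightarrow> nat" where
  "sseq i = 1 + multiplicity (2::nat) i"

definition yseq :: "nat \<Rightarrow> nat" where
  "yseq i = (\<Sum>j\<in>{1..<i}. sseq j)"

definition bar :: "nat \<Rightarrow> nat \<Rightarrow> (real \<times> real) set" where
  "bar m i = {(real i - 1) * real m .. real i * real m} \<times> {real (yseq i) .. real (yseq i) + 1}"

definition connector :: "nat \<Rightarrow> nat \<Rightarrow> (real \<times> real) set" where
  "connector m i = {real i * real m - 1 .. real i * real m} \<times> {real (yseq i) + 1 .. real (yseq (i+1)) + 1}"

definition Dnm :: "nat \<Rightarrow> nat \<Rightarrow> (real \<times> real) set" where
  "Dnm n m = (\<Union>i\<in>{1..2^n}. bar m i) \<union> (\<Union>i\<in>{1..<2^n}. connector m i)"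

definition topological_disk :: "(real \<times> real) set \<Rightarrow> bool" where
  "topological_disk A \<longleftrightarrow> (cball (0::real \<times> real) 1) homeomorphic A"

end

theory Submission
  imports Defs
begin

(*
  On the unit grid, the column u of D_n^m lying in the bar B_i is a vertical run of unit squares
  at height y_i, extended up to y_{i+1} in the column of the connector V_i. Since
  y_{x+1} = x + nu_2(x!), the heights are superadditive, y_{a+1} + y_{b+1} <= y_{a+b+1}, and
  additive across dyadic blocks: y_{T+x+1} = y_{T+1} + y_{x+1} when 2^K divides T and x < 2^K.

  With n <= d <= m, the k-th translate is moved right by (2^n - 2^(k-1)) m + (d - k) and up by
  y_{2^n-2^(k-1)+1} + k. By additivity its first 2^(k-1) bars then lie one unit above the last
  2^(k-1) bars of D_n^m, so it touches D_n^m and lies strictly above it in every common column.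
  For 1 <= i < j, the i-th translate lies t = 2^(j-1) - 2^(i-1) blocks and j - i columns further
  right than the j-th one, but less than y_{t+1} higher, so by superadditivity it lies strictly
  below it in every common column. Hence two translates meet only on grid lines, a set with empty
  interior.

  For the second statement D_n^m is replaced by a band inside it in which every connector becomes
  a ramp: the region between the graph of a continuous function and its unit upward translate,
  hence a disk. For d > n the band still touches its translates.
*)

lemma yseq_Suc: "0 < i \<Longrightarrow> yseq (Suc i) = yseq i + sseq i"
  unfolding yseq_def by (simp add: sum.atLeastLessThan_Suc)

lemma yseq_Suc_0 [simp]: "yseq (Suc 0) = 0"
  by (simp add: yseq_def)

lemma mono_yseq: "mono yseq"
  unfolding mono_def yseq_def by (auto intro!: sum_mono2)

lemma yseq_Suc_eq_multiplicity_fact: "yseq (Suc x) = x + multiplicity (2::nat) (fact x)"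
proof (induction x)
  case 0
  then show ?case by simp
next
  case (Suc x)
  have "multiplicity (2::nat) (fact (Suc x)) = multiplicity 2 (Suc x) + multiplicity 2 (fact x :: nat)"
    unfolding fact_Suc of_nat_id by (rule prime_elem_multiplicity_mult_distrib) auto
  then show ?case
    using Suc yseq_Suc[of "Suc x"] by (simp add: sseq_def)
qed

lemma yseq_superadditive: "yseq (Suc a) + yseq (Suc b) \<le> yseq (Suc (a + b))"
proof -
  have "fact (a + b) = fact a * fact b * ((a + b) choose a :: nat)"
    using binomial_fact_lemma[of a "a + b"] by simp
  then have "multiplicity (2::nat) (fact (a + b))
      = multiplicity 2 (fact a :: nat) + multiplicity 2 (fact b :: nat) + multiplicity 2 ((a + b) choose a)"
    by (simp add: prime_elem_multiplicity_mult_distrib)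
  then show ?thesis
    unfolding yseq_Suc_eq_multiplicity_fact by simp
qed

lemma multiplicity_less_if_less_power:
  fixes p r :: nat
  assumes "1 < p" "0 < r" "r < p ^ K"
  shows "multiplicity p r < K"
proof -
  have "p ^ multiplicity p r \<le> r"
    using assms by (simp add: dvd_imp_le multiplicity_dvd)
  then show ?thesis
    using assms by (metis le_less_trans power_less_imp_less_exp)
qed

lemma sseq_le: "0 < r \<Longrightarrow> r < 2 ^ K \<Longrightarrow> sseq r \<le> K"
  using multiplicity_less_if_less_power[of 2 r K] by (simp add: sseq_def)

lemma sseq_power_two: "sseq (2 ^ K) = Suc K"
  by (simp add: sseq_def)

lemma multiplicity_add_multiple:
  fixes p T x :: nat
  assumes "prime p" "p ^ K dvd T" "0 < x" "x < p ^ K"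
  shows "multiplicity p (T + x) = multiplicity p x"
proof (cases "T = 0")
  case False
  have "multiplicity p x < K"
    using assms prime_gt_1_nat by (intro multiplicity_less_if_less_power) auto
  also have "K \<le> multiplicity p T"
    using assms False prime_gt_1_nat by (intro multiplicity_geI) auto
  finally show ?thesis
    using multiplicity_sum_lt[of p x T] assms False by (simp add: add.commute)
qed simp

lemma yseq_shift:
  assumes "2 ^ K dvd T" "x < 2 ^ K"
  shows "yseq (T + x + 1) = yseq (T + 1) + yseq (x + 1)"
  using assms(2)
proof (induction x)
  case (Suc x)
  have "sseq (T + Suc x) = sseq (Suc x)"
    using multiplicity_add_multiple[of 2 K T "Suc x"] assms(1) Suc.prems by (simp add: sseq_def)
  then show ?case
    using Suc yseq_Suc[of "T + Suc x"] yseq_Suc[of "Suc x"] by simp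
qed simp

lemma yseq_Suc_le:
  assumes "x \<le> r" "x < 2 ^ K"
  shows "yseq (Suc x) \<le> yseq r + K"
proof (cases "x < r")
  case True
  then show ?thesis
    using monoD[OF mono_yseq, of "Suc x" r] by simp
next
  case False
  then show ?thesis
    using assms yseq_Suc[of x] sseq_le[of x K] by (cases "x = 0") auto
qed

(* (u, v) is the lower-left corner of a unit square of D_n^m. *)
definition grid_cell :: "nat \<Rightarrow> nat \<Rightarrow> int \<Rightarrow> int \<Rightarrow> bool" where
  "grid_cell n m u v \<longleftrightarrow> (\<exists>i\<in>{1..2^n}. int ((i - 1) * m) \<le> u \<and> u < int (i * m) \<and>
     int (yseq i) \<le> v \<and> v \<le> int (if u = int (i * m) - 1 \<and> i < 2^n then yseq (i + 1) else yseq i))"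

lemma grid_cellE:
  assumes "grid_cell n m u v"
  obtains i where "1 \<le> i" "i \<le> 2^n" "int ((i - 1) * m) \<le> u" "u < int (i * m)"
    "int (yseq i) \<le> v" "v \<le> int (yseq (i + 1))"
    "u \<noteq> int (i * m) - 1 \<or> i = 2^n \<Longrightarrow> v \<le> int (yseq i)"
proof -
  obtain i where i: "i \<in> {1..2^n}" "int ((i - 1) * m) \<le> u" "u < int (i * m)" "int (yseq i) \<le> v"
    "v \<le> int (if u = int (i * m) - 1 \<and> i < 2^n then yseq (i + 1) else yseq i)"
    using assms unfolding grid_cell_def by blast
  have "yseq i \<le> yseq (i + 1)"
    using mono_yseq by (simp add: monoD)
  with i show ?thesis
    by (intro that[of i]) (auto split: if_splits)
qed

lemma floor_between:
  fixes x :: "'a :: floor_ceiling"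
  assumes "of_int a \<le> x" "x \<le> of_int b" "x \<notin> \<int>"
  shows "a \<le> \<lfloor>x\<rfloor> \<and> \<lfloor>x\<rfloor> < b"
proof -
  have "x < of_int b"
    using assms(2,3) by (metis Ints_of_int order_le_less)
  then show ?thesis
    using assms(1) by (simp add: le_floor_iff floor_less_iff)
qed

lemma floor_diff_of_nat: "\<lfloor>x - of_nat k\<rfloor> = \<lfloor>x\<rfloor> - int k"
  by (metis floor_diff_of_int of_int_of_nat_eq)

lemma grid_cell_floor:
  assumes "(x, y) \<in> Dnm n m" "x \<notin> \<int>" "y \<notin> \<int>" "0 < m"
  shows "grid_cell n m \<lfloor>x\<rfloor> \<lfloor>y\<rfloor>"
  using assms(1) unfolding Dnm_def
proof (elim UnE UN_E)
  fix i assume i: "i \<in> {1..2^n}" "(x, y) \<in> bar m i"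
  then have "int ((i - 1) * m) \<le> \<lfloor>x\<rfloor> \<and> \<lfloor>x\<rfloor> < int (i * m)"
    using assms(2) by (intro floor_between) (auto simp: bar_def of_nat_diff)
  moreover have "int (yseq i) \<le> \<lfloor>y\<rfloor> \<and> \<lfloor>y\<rfloor> < int (yseq i) + 1"
    using i assms(3) by (intro floor_between) (auto simp: bar_def)
  moreover have "yseq i \<le> yseq (i + 1)"
    using mono_yseq by (simp add: monoD)
  ultimately show ?thesis
    unfolding grid_cell_def using i(1) by (intro bexI[of _ i]) auto
next
  fix i assume i: "i \<in> {1..<2^n}" "(x, y) \<in> connector m i"
  then have "int (i * m) - 1 \<le> \<lfloor>x\<rfloor> \<and> \<lfloor>x\<rfloor> < int (i * m)"
    using assms(2) by (intro floor_between) (auto simp: connector_def)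
  moreover have "int (yseq i) + 1 \<le> \<lfloor>y\<rfloor> \<and> \<lfloor>y\<rfloor> < int (yseq (i + 1)) + 1"
    using i assms(3) by (intro floor_between) (auto simp: connector_def)
  moreover have "int ((i - 1) * m) \<le> int (i * m) - 1"
    using i assms(4) by (simp add: of_nat_diff algebra_simps)
  ultimately show ?thesis
    unfolding grid_cell_def using i(1) by (intro bexI[of _ i]) auto
qed

lemma block_of_shifted_column:
  assumes "int ((q - 1) * m) \<le> u" "u < int (q * m)"
    and "int ((r - 1) * m) \<le> u - int (t * m + c)" "u - int (t * m + c) < int (r * m)"
    and "c < m" "0 < q" "0 < r"
  shows "q = r + t \<or> q = r + t + 1"
proof -
  have "(r - 1) * m + t * m < q * m" "(q - 1) * m < r * m + t * m + m"
    using assms(1-5) by linarith+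
  then have "(r - 1 + t) * m < q * m" "(q - 1) * m < (r + t + 1) * m"
    by (simp_all add: add_mult_distrib)
  then show ?thesis
    using assms(6,7) by (simp only: mult_less_cancel2) linarith
qed

lemma grid_cell_low_shift_disjoint:
  assumes "grid_cell n m u v" "grid_cell n m (u - int (t * m + c)) (v - \<beta>)"
    and "0 < c" "c < m" "\<beta> < int (yseq (t + 1))"
  shows False
proof -
  obtain q where q: "1 \<le> q" "int ((q - 1) * m) \<le> u" "u < int (q * m)" "int (yseq q) \<le> v"
    using assms(1) by (elim grid_cellE)
  obtain r where r: "1 \<le> r" "int ((r - 1) * m) \<le> u - int (t * m + c)" "u - int (t * m + c) < int (r * m)"
    "v - \<beta> \<le> int (yseq (r + 1))" "u - int (t * m + c) \<noteq> int (r * m) - 1 \<Longrightarrow> v - \<beta> \<le> int (yseq r)"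
    using assms(2) by (elim grid_cellE) blast
  have "q = r + t \<or> q = r + t + 1"
    using q r assms(4) by (intro block_of_shifted_column) auto
  then obtain p where p: "1 \<le> p" "q = p + t" "v - \<beta> \<le> int (yseq p)"
  proof
    assume "q = r + t"
    then have "u - int (t * m + c) \<noteq> int (r * m) - 1"
      using q(3) assms(3) by (auto simp: algebra_simps)
    then show ?thesis
      using r \<open>q = r + t\<close> by (intro that[of r]) auto
  qed (use r in auto)
  have "yseq p + yseq (t + 1) \<le> yseq q"
    using yseq_superadditive[of "p - 1" t] p by simp
  then show False
    using p(3) q(4) assms(5) by linarith
qed

lemma grid_cell_high_shift_disjoint:
  assumes "grid_cell n m u v" "grid_cell n m (u - int (t * m + c)) (v - int (yseq (t + 1) + K + 1))"
    and "2 ^ K dvd t" "t + 2 ^ K = 2 ^ n" "c < m"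
  shows False
proof -
  obtain q where q: "1 \<le> q" "q \<le> 2^n" "int ((q - 1) * m) \<le> u" "u < int (q * m)"
    "v \<le> int (yseq (q + 1))" "u \<noteq> int (q * m) - 1 \<or> q = 2^n \<Longrightarrow> v \<le> int (yseq q)"
    using assms(1) by (elim grid_cellE) blast
  obtain r where r: "1 \<le> r" "int ((r - 1) * m) \<le> u - int (t * m + c)" "u - int (t * m + c) < int (r * m)"
    "int (yseq r) \<le> v - int (yseq (t + 1) + K + 1)"
    using assms(2) by (elim grid_cellE)
  have qr: "q = r + t \<or> q = r + t + 1"
    using q r assms(5) by (intro block_of_shifted_column) auto
  obtain x where x: "v \<le> int (yseq (t + x + 1))" "x \<le> r" "x < 2 ^ K"
  proof (cases "v \<le> int (yseq q)")
    case True
    then show ?thesis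
      using qr q(2) r(1) assms(4) by (intro that[of "q - t - 1"]) (auto simp: ac_simps)
  next
    case False
    then have "\<not> (u \<noteq> int (q * m) - 1 \<or> q = 2^n)"
      using q(6) by blast
    then have "u = int (q * m) - 1" "q < 2^n"
      using q(2) by auto
    then have "q = r + t"
      using qr r(3) assms(5) by (auto simp: algebra_simps)
    then show ?thesis
      using q(5) \<open>q < 2^n\<close> assms(4) by (intro that[of r]) (auto simp: add.commute)
  qed
  have "yseq (t + x + 1) = yseq (t + 1) + yseq (Suc x)"
    using yseq_shift[OF assms(3) x(3)] by simp
  also have "\<dots> \<le> yseq (t + 1) + yseq r + K"
    using yseq_Suc_le[OF x(2,3)] by simp
  finally show False
    using x(1) r(4) by linarith
qed

definition block_offset :: "nat \<Rightarrow> nat \<Rightarrow> nat" where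
  "block_offset n k = 2^n - 2^(k - 1)"

definition hshift :: "nat \<Rightarrow> nat \<Rightarrow> nat \<Rightarrow> nat \<Rightarrow> nat" where
  "hshift n m d k = (if k = 0 then 0 else block_offset n k * m + (d - k))"

definition vshift :: "nat \<Rightarrow> nat \<Rightarrow> nat" where
  "vshift n k = (if k = 0 then 0 else yseq (block_offset n k + 1) + k)"

definition translation :: "nat \<Rightarrow> nat \<Rightarrow> nat \<Rightarrow> nat \<Rightarrow> real \<times> real" where
  "translation n m d k = (real (hshift n m d k), real (vshift n k))"

lemma translation_0 [simp]: "translation n m d 0 = 0"
  by (simp add: translation_def hshift_def vshift_def zero_prod_def)

lemma block_offset_add:
  assumes "0 < k" "k \<le> n"
  shows "2^(k - 1) dvd block_offset n k" "block_offset n k + 2^(k - 1) = 2^n"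
proof -
  have "(2::nat)^n = 2^(k - 1) * 2^(n - (k - 1))"
    using assms by (simp flip: power_add)
  then show "2^(k - 1) dvd block_offset n k"
    unfolding block_offset_def by (metis dvd_diff_nat dvd_refl dvd_triv_left)
  have "(2::nat)^(k - 1) \<le> 2^n"
    using assms by (simp add: power_increasing)
  then show "block_offset n k + 2^(k - 1) = 2^n"
    by (simp add: block_offset_def)
qed

lemma grid_cells_of_translations_disjoint:
  assumes "i < j" "j \<le> n" "n \<le> d" "d \<le> m"
    and "grid_cell n m (U - int (hshift n m d i)) (V - int (vshift n i))"
    and "grid_cell n m (U - int (hshift n m d j)) (V - int (vshift n j))"
  shows False
proof (cases "i = 0")
  case True
  have "grid_cell n m U V"
    using assms(5) True by (simp add: hshift_def vshift_def)
  moreover have "grid_cell n m (U - int (block_offset n j * m + (d - j)))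
      (V - int (yseq (block_offset n j + 1) + (j - 1) + 1))"
    using assms(1,6) by (simp add: hshift_def vshift_def)
  moreover have "2^(j - 1) dvd block_offset n j" "block_offset n j + 2^(j - 1) = 2^n"
    using assms(1,2) block_offset_add[of j n] by simp_all
  moreover have "d - j < m"
    using assms(1-4) by linarith
  ultimately show False
    by (rule grid_cell_high_shift_disjoint)
next
  case False
  define t :: nat where "t = 2^(j - 1) - 2^(i - 1)"
  have "(2::nat)^(i - 1) < 2^(j - 1)" "(2::nat)^(j - 1) \<le> 2^n"
    using assms False by (simp_all add: power_strict_increasing_iff power_increasing)
  then have t: "t < 2^(j - 1)" "block_offset n i = block_offset n j + t"
    unfolding t_def block_offset_def by auto
  have yseq_i: "yseq (block_offset n i + 1) = yseq (block_offset n j + 1) + yseq (t + 1)"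
    using yseq_shift[OF block_offset_add(1)[of j n] t(1)] t(2) assms by simp
  define \<beta> where "\<beta> = int (yseq (t + 1)) + int i - int j"
  have "int (hshift n m d i) = int (hshift n m d j) + int (t * m + (j - i))"
    "int (vshift n i) = int (vshift n j) + \<beta>"
    using assms False t(2) yseq_i
    by (auto simp: hshift_def vshift_def \<beta>_def add_mult_distrib)
  then have "grid_cell n m (U - int (hshift n m d j) - int (t * m + (j - i))) (V - int (vshift n j) - \<beta>)"
    using assms(5) by (simp only: diff_diff_eq)
  moreover have "0 < j - i" "j - i < m" "\<beta> < int (yseq (t + 1))"
    using assms(1-4) False by (auto simp: \<beta>_def)
  ultimately show False
    by (rule grid_cell_low_shift_disjoint[OF assms(6)])
qed

lemma interior_Ints_real: "interior (\<int> :: real set) = {}"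
proof -
  have "\<not> ball x e \<subseteq> \<int>" if "0 < e" for x e :: real
  proof
    assume "ball x e \<subseteq> \<int>"
    moreover have "countable (\<int> :: real set)"
      by (simp add: Ints_def)
    ultimately have "countable (ball x e)"
      by (rule countable_subset)
    then show False
      using that uncountable_open_interval[of "x - e" "x + e"] by (simp add: ball_eq_greaterThanLessThan)
  qed
  then show ?thesis
    by (meson equals0I mem_interior)
qed

lemma interior_grid_lines: "interior {p :: real \<times> real. fst p \<in> \<int> \<or> snd p \<in> \<int>} = {}"
proof -
  have "{p :: real \<times> real. fst p \<in> \<int> \<or> snd p \<in> \<int>} = \<int> \<times> UNIV \<union> UNIV \<times> \<int>"
    by auto
  moreover have "interior ((\<int> :: real set) \<times> (UNIV :: real set)) = {}"
    "interior ((UNIV :: real set) \<times> (\<int> :: real set)) = {}"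
    by (simp_all add: interior_Times interior_Ints_real)
  ultimately show ?thesis
    by (simp add: interior_closed_Un_empty_interior closed_Times)
qed

lemma mem_translation_iff:
  fixes a :: "'a :: ab_group_add"
  shows "p \<in> (\<lambda>x. a + x) ` S \<longleftrightarrow> p - a \<in> S"
  by (auto simp: image_iff intro!: bexI[of _ "p - a"])

lemma translations_Dnm_inter_subset_grid_lines:
  assumes "i < j" "j \<le> n" "n \<le> d" "d \<le> m"
  shows "(\<lambda>x. translation n m d i + x) ` Dnm n m \<inter> (\<lambda>x. translation n m d j + x) ` Dnm n m
    \<subseteq> {p. fst p \<in> \<int> \<or> snd p \<in> \<int>}"
proof (intro subsetI CollectI)
  fix p assume p: "p \<in> (\<lambda>x. translation n m d i + x) ` Dnm n m \<inter> (\<lambda>x. translation n m d j + x) ` Dnm n m"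
  obtain x y where xy: "p = (x, y)"
    by (cases p)
  show "fst p \<in> \<int> \<or> snd p \<in> \<int>"
  proof (rule ccontr)
    assume "\<not> (fst p \<in> \<int> \<or> snd p \<in> \<int>)"
    then have nonint: "x - real a \<notin> \<int>" "y - real b \<notin> \<int>" for a b
      using xy by auto
    have cell: "grid_cell n m (\<lfloor>x\<rfloor> - int (hshift n m d k)) (\<lfloor>y\<rfloor> - int (vshift n k))"
      if "p \<in> (\<lambda>x. translation n m d k + x) ` Dnm n m" for k
    proof -
      have "(x - real (hshift n m d k), y - real (vshift n k)) \<in> Dnm n m"
        using that xy by (simp add: mem_translation_iff translation_def)
      then have "grid_cell n m \<lfloor>x - real (hshift n m d k)\<rfloor> \<lfloor>y - real (vshift n k)\<rfloor>"
        using nonint assms by (intro grid_cell_floor) auto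
      then show ?thesis
        by (simp only: floor_diff_of_nat)
    qed
    show False
      using grid_cells_of_translations_disjoint[OF assms cell cell] p by blast
  qed
qed

lemma interior_translations_Dnm_disjoint:
  assumes "i \<le> n" "j \<le> n" "i \<noteq> j" "n \<le> d" "d \<le> m"
  shows "interior ((\<lambda>x. translation n m d i + x) ` Dnm n m)
    \<inter> interior ((\<lambda>x. translation n m d j + x) ` Dnm n m) = {}"
proof -
  have "(\<lambda>x. translation n m d i + x) ` Dnm n m \<inter> (\<lambda>x. translation n m d j + x) ` Dnm n m
      \<subseteq> {p. fst p \<in> \<int> \<or> snd p \<in> \<int>}"
  proof (cases "i < j")
    case True
    then show ?thesis
      using assms by (intro translations_Dnm_inter_subset_grid_lines) auto
  next
    case False
    then show ?thesis
      using assms translations_Dnm_inter_subset_grid_lines[of j i n d m] by auto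
  qed
  then have "interior ((\<lambda>x. translation n m d i + x) ` Dnm n m \<inter> (\<lambda>x. translation n m d j + x) ` Dnm n m) = {}"
    using interior_mono interior_grid_lines by blast
  then show ?thesis
    by (simp add: interior_Int)
qed

definition ramp :: "real \<Rightarrow> real" where
  "ramp z = max 0 (min 1 z)"

(* The connector V_i becomes a ramp of height s_i = y_{i+1} - y_i over [i m - 1, i m]. *)
definition band_profile :: "nat \<Rightarrow> nat \<Rightarrow> real \<Rightarrow> real" where
  "band_profile n m x = (\<Sum>j\<in>{1..<2^n}. real (sseq j) * ramp (x - (real j * real m - 1)))"

definition band :: "nat \<Rightarrow> nat \<Rightarrow> (real \<times> real) set" where
  "band n m = {(x, y). 0 \<le> x \<and> x \<le> real (2^n) * real m \<and>
     band_profile n m x \<le> y \<and> y \<le> band_profile n m x + 1}"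

lemma band_profile_on_block:
  assumes "0 < m" "1 \<le> i" "i \<le> 2^n" "(real i - 1) * real m \<le> x" "x \<le> real i * real m"
  shows "band_profile n m x
    = real (yseq i) + (if i < 2^n then real (sseq i) * ramp (x - (real i * real m - 1)) else 0)"
proof -
  let ?f = "\<lambda>j. real (sseq j) * ramp (x - (real j * real m - 1))"
  have "sum ?f {1..<i} = sum (\<lambda>j. real (sseq j)) {1..<i}"
  proof (rule sum.cong)
    fix j assume "j \<in> {1..<i}"
    then have "real j * real m \<le> (real i - 1) * real m"
      by (intro mult_right_mono) auto
    then show "?f j = real (sseq j)"
      using assms(4) by (simp add: ramp_def)
  qed simp
  then have below: "sum ?f {1..<i} = real (yseq i)"
    by (simp add: yseq_def)
  have above: "sum ?f {Suc i..<2^n} = 0"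
  proof (intro sum.neutral ballI)
    fix j assume "j \<in> {Suc i..<2^n}"
    then have "(real i + 1) * real m \<le> real j * real m"
      by (intro mult_right_mono) auto
    then show "?f j = 0"
      using assms(1,5) by (simp add: ramp_def algebra_simps)
  qed
  have split: "sum ?f {1..<2^n} = sum ?f {1..<i} + sum ?f {i..<2^n}"
    using assms(2,3) by (simp add: sum.atLeastLessThan_concat)
  show ?thesis
  proof (cases "i < 2^n")
    case True
    then have "sum ?f {i..<2^n} = ?f i + sum ?f {Suc i..<2^n}"
      by (simp add: sum.atLeast_Suc_lessThan)
    then show ?thesis
      unfolding band_profile_def using True split below above by simp
  next
    case False
    then show ?thesis
      unfolding band_profile_def using assms(3) split below by simp
  qed
qed

lemma band_profile_flat:
  assumes "0 < m" "1 \<le> i" "i \<le> 2^n" "(real i - 1) * real m \<le> x"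
    and "x \<le> real i * real m - 1 \<or> i = 2^n \<and> x \<le> real i * real m"
  shows "band_profile n m x = real (yseq i)"
proof -
  have "x \<le> real i * real m"
    using assms(5) by auto
  from band_profile_on_block[OF assms(1-4) this] show ?thesis
    using assms(5) by (auto simp: ramp_def)
qed

lemma in_band_flat:
  assumes "0 < m" "1 \<le> i" "i \<le> 2^n" "(real i - 1) * real m \<le> x"
    and "x \<le> real i * real m - 1 \<or> i = 2^n \<and> x \<le> real i * real m"
    and "real (yseq i) \<le> y" "y \<le> real (yseq i) + 1"
  shows "(x, y) \<in> band n m"
proof -
  have "0 \<le> (real i - 1) * real m"
    using assms(2) by simp
  moreover have "real i * real m \<le> real (2^n) * real m"
    using assms(3) by (intro mult_right_mono) auto
  ultimately have "0 \<le> x" "x \<le> real (2^n) * real m"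
    using assms(4,5) by auto
  then show ?thesis
    using assms(6,7) band_profile_flat[OF assms(1-5)] unfolding band_def by auto
qed

lemma block_containing:
  assumes "0 < m" "0 \<le> x" "x \<le> real (2^n) * real m"
  obtains i where "1 \<le> i" "i \<le> 2^n" "(real i - 1) * real m \<le> x" "x \<le> real i * real m"
proof -
  define c where "c = \<lceil>x / real m\<rceil>"
  define i where "i = max 1 (nat c)"
  have c: "real_of_int c - 1 < x / real m" "x / real m \<le> real_of_int c"
    unfolding c_def using ceiling_correct by blast+
  have "0 \<le> x / real m" "x / real m \<le> real (2^n)"
    using assms by (simp_all add: pos_divide_le_eq)
  then have "0 \<le> c" "c \<le> 2^n"
    unfolding c_def by (simp_all add: ceiling_le_iff)
  then have i: "real i = max 1 (real_of_int c)" "i \<le> 2^n"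
    unfolding i_def by (auto simp: max_def nat_le_iff)
  have "real i - 1 \<le> x / real m" "x / real m \<le> real i"
    using c i(1) \<open>0 \<le> x / real m\<close> by (auto simp: max_def)
  then have "(real i - 1) * real m \<le> x" "x \<le> real i * real m"
    using assms(1) by (simp_all add: pos_le_divide_eq pos_divide_le_eq)
  then show ?thesis
    using i(2) by (intro that[of i]) (auto simp: i_def)
qed

lemma band_subset_Dnm:
  assumes "0 < m"
  shows "band n m \<subseteq> Dnm n m"
proof
  fix p assume "p \<in> band n m"
  then obtain x y where p: "p = (x, y)" "0 \<le> x" "x \<le> real (2^n) * real m"
    "band_profile n m x \<le> y" "y \<le> band_profile n m x + 1"
    unfolding band_def by auto
  obtain i where i: "1 \<le> i" "i \<le> 2^n" "(real i - 1) * real m \<le> x" "x \<le> real i * real m"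
    using block_containing[OF assms p(2,3)] .
  define h where "h = (if i < 2^n then real (sseq i) * ramp (x - (real i * real m - 1)) else 0)"
  have profile: "band_profile n m x = real (yseq i) + h"
    using band_profile_on_block[OF assms i] by (simp add: h_def)
  have h: "0 \<le> h" "h \<le> real (sseq i)"
    unfolding h_def ramp_def by (auto simp: mult_left_le)
  show "p \<in> Dnm n m"
  proof (cases "y \<le> real (yseq i) + 1")
    case True
    then have "(x, y) \<in> bar m i"
      using i p profile h unfolding bar_def by auto
    then show ?thesis
      using i p(1) unfolding Dnm_def by auto
  next
    case False
    then have "0 < h"
      using p(5) profile by linarith
    then have "i < 2^n" "0 < ramp (x - (real i * real m - 1))"
      unfolding h_def by (auto simp: zero_less_mult_iff split: if_splits)
    then have "i < 2^n" "real i * real m - 1 < x"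
      unfolding ramp_def by auto
    moreover have "real (yseq (i + 1)) = real (yseq i) + real (sseq i)"
      using yseq_Suc[of i] i(1) by simp
    ultimately have "(x, y) \<in> connector m i"
      using False i p profile h unfolding connector_def by auto
    then show ?thesis
      using i \<open>i < 2^n\<close> p(1) unfolding Dnm_def by auto
  qed
qed

lemma continuous_on_band_profile: "continuous_on S (band_profile n m)"
  unfolding band_profile_def ramp_def by (intro continuous_intros)

lemma band_topological_disk:
  assumes "0 < m"
  shows "topological_disk (band n m)"
proof -
  define S where "S = {0..real (2^n) * real m} \<times> {0..(1::real)}"
  define f where "f = (\<lambda>(x, y). (x, band_profile n m x + y))"
  have "interior S \<noteq> {}"
    unfolding S_def interior_Times using assms by (simp add: not_le zero_less_mult_iff)
  then have "cball (0::real \<times> real) 1 homeomorphic S"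
    unfolding S_def
    by (intro homeomorphic_convex_compact_sets)
       (auto simp: compact_Times convex_Times aff_dim_cball aff_dim_nonempty_interior)
  moreover have "S homeomorphic band n m"
  proof (rule homeomorphic_compact)
    show "compact S"
      unfolding S_def by (intro compact_Times compact_Icc)
    show "continuous_on S f"
      unfolding f_def case_prod_unfold
      by (intro continuous_intros continuous_on_compose2[OF continuous_on_band_profile]) auto
    show "inj_on f S"
      unfolding f_def inj_on_def by auto
    show "f ` S = band n m"
    proof
      show "f ` S \<subseteq> band n m"
        unfolding f_def S_def band_def by auto
      show "band n m \<subseteq> f ` S"
      proof
        fix p assume "p \<in> band n m"
        then have "(fst p, snd p - band_profile n m (fst p)) \<in> S"
          "p = f (fst p, snd p - band_profile n m (fst p))"
          unfolding S_def band_def f_def by auto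
        then show "p \<in> f ` S"
          by blast
      qed
    qed
  qed
  ultimately show ?thesis
    unfolding topological_disk_def by (rule homeomorphic_trans)
qed

lemma translation_eq:
  assumes "0 < k"
  shows "translation n m d k
    = (real (block_offset n k) * real m + real (d - k), real (yseq (block_offset n k + 1)) + real k)"
  using assms by (simp add: translation_def hshift_def vshift_def)

(* The first bar of the translate rests on the last bar of D_n^m. *)
lemma first_translation_contact:
  assumes "0 < n" "n \<le> d" "d \<le> m"
  obtains P where "P \<in> band n m" "P - translation n m d 1 \<in> band n m"
proof -
  define t where "t = block_offset n 1"
  have m: "0 < m" "d - 1 < m"
    using assms by linarith+
  have "(2::nat)^n = t + 1"
    using block_offset_add[of 1 n] assms(1) unfolding t_def by simp
  then have "2^n * m = t * m + m"
    by simp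
  then have "real (2^n) * real m = real t * real m + real m"
    by (metis of_nat_add of_nat_mult)
  then have "(real t * real m + real (d - 1), real (yseq (2^n)) + 1) \<in> band n m"
    using m by (intro in_band_flat[of m "2^n"]) (auto simp: left_diff_distrib)
  moreover have "(real t * real m + real (d - 1), real (yseq (2^n)) + 1) - translation n m d 1 = (0, 0)"
    using block_offset_add[of 1 n] assms(1) unfolding translation_eq[OF zero_less_one] t_def
    by (simp add: zero_prod_def)
  moreover have "(0, 0) \<in> band n m"
    using m by (intro in_band_flat[of m 1]) auto
  ultimately show ?thesis
    by (intro that) auto
qed

(* The bar B_r, r = 2^(k-2), of the translate rests on the bar B_(t+r+1) of D_n^m, t = block_offset n k. *)
lemma later_translation_contact:
  assumes "2 \<le> k" "k \<le> n" "n \<le> d" "d \<le> m"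
  obtains P where "P \<in> band n m" "P - translation n m d k \<in> Dnm n m"
    "k < d \<Longrightarrow> P - translation n m d k \<in> band n m"
proof -
  define t where "t = block_offset n k"
  define r :: nat where "r = 2^(k - 2)"
  define i where "i = t + r"
  have m: "0 < m" "d - k < m"
    using assms by linarith+
  have t: "2^(k - 1) dvd t" "t + 2^(k - 1) = 2^n"
    using block_offset_add assms unfolding t_def by auto
  have r: "1 \<le> r" "r < 2^(k - 1)" "sseq r = k - 1"
    using assms(1) unfolding r_def by (auto simp: sseq_power_two power_strict_increasing_iff)
  have "yseq (i + 1) = yseq (t + 1) + yseq (r + 1)"
    using yseq_shift[OF t(1) r(2)] unfolding i_def .
  also have "yseq (r + 1) = yseq r + (k - 1)"
    using yseq_Suc[of r] r by simp
  finally have yi: "real (yseq (i + 1)) = real (yseq (t + 1)) + real (yseq r) + real k - 1"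
    using assms(1) by simp
  let ?P = "(real i * real m, real (yseq (i + 1)) + 1)"
  let ?Q = "(real r * real m - real (d - k), real (yseq r))"
  have "i + 1 \<le> 2^n" "r \<le> 2^n"
    using r(2) t(2) unfolding i_def by linarith+
  then have "?P \<in> band n m"
    using m by (intro in_band_flat[of m "i + 1"]) (auto simp: algebra_simps)
  moreover have "?P - translation n m d k = ?Q"
    using yi assms(1) translation_eq[of k n m d] unfolding i_def t_def by (simp add: algebra_simps)
  moreover have "?Q \<in> Dnm n m"
    using r(1) m \<open>r \<le> 2^n\<close> unfolding Dnm_def bar_def by (auto simp: algebra_simps intro!: bexI[of _ r])
  moreover have "?Q \<in> band n m" if "k < d"
    using that m r(1) \<open>r \<le> 2^n\<close> by (intro in_band_flat[of m r]) (auto simp: algebra_simps)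
  ultimately show ?thesis
    by (intro that[of ?P]) auto
qed

lemma translation_contact:
  assumes "0 < k" "k \<le> n" "n \<le> d" "d \<le> m"
  obtains P where "P \<in> band n m" "P - translation n m d k \<in> Dnm n m"
    "k < d \<Longrightarrow> P - translation n m d k \<in> band n m"
proof (cases "k = 1")
  case True
  have "band n m \<subseteq> Dnm n m"
    using assms by (intro band_subset_Dnm) linarith
  obtain P where "P \<in> band n m" "P - translation n m d 1 \<in> band n m"
    using first_translation_contact[of n d m] assms True by auto
  then show ?thesis
    using True \<open>band n m \<subseteq> Dnm n m\<close> by (intro that[of P]) auto
next
  case False
  then show ?thesis
    using later_translation_contact[of k n d m] assms that by auto
qed

lemma Dnm_touches_translation:
  assumes "0 < k" "k \<le> n" "n \<le> d" "d \<le> m"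
  shows "Dnm n m \<inter> (\<lambda>x. translation n m d k + x) ` Dnm n m \<noteq> {}"
proof -
  obtain P where "P \<in> band n m" "P - translation n m d k \<in> Dnm n m"
    using translation_contact[OF assms] by blast
  moreover have "band n m \<subseteq> Dnm n m"
    using assms by (intro band_subset_Dnm) linarith
  ultimately show ?thesis
    by (auto simp: mem_translation_iff)
qed

lemma band_touches_translation:
  assumes "0 < k" "k \<le> n" "n < d" "d \<le> m"
  shows "band n m \<inter> (\<lambda>x. translation n m d k + x) ` band n m \<noteq> {}"
proof -
  obtain P where "P \<in> band n m" "k < d \<Longrightarrow> P - translation n m d k \<in> band n m"
    using translation_contact[OF assms(1,2) less_imp_le[OF assms(3)] assms(4)] by blast
  moreover have "k < d"
    using assms(2,3) by linarith
  ultimately show ?thesis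
    by (auto simp: mem_translation_iff)
qed

lemma interior_translations_band_disjoint:
  assumes "i \<le> n" "j \<le> n" "i \<noteq> j" "n \<le> d" "d \<le> m" "0 < m"
  shows "interior ((\<lambda>x. translation n m d i + x) ` band n m)
    \<inter> interior ((\<lambda>x. translation n m d j + x) ` band n m) = {}"
proof -
  have "interior ((\<lambda>x. translation n m d k + x) ` band n m)
      \<subseteq> interior ((\<lambda>x. translation n m d k + x) ` Dnm n m)" for k
    using band_subset_Dnm[OF assms(6)] by (intro interior_mono image_mono)
  then show ?thesis
    using interior_translations_Dnm_disjoint[OF assms(1-5)] by blast
qed

theorem theorem3:
  shows "(\<forall>n m :: nat. 2 \<le> n \<longrightarrow> n \<le> m \<longrightarrow>
            (\<exists>t :: nat \<Rightarrow> real \<times> real.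
               (\<forall>i\<le>n. \<forall>j\<le>n. i \<noteq> j \<longrightarrow>
                  interior ((\<lambda>x. t i + x) ` Dnm n m) \<inter> interior ((\<lambda>x. t j + x) ` Dnm n m) = {}) \<and>
               (\<forall>i\<in>{1..n}. ((\<lambda>x. t 0 + x) ` Dnm n m) \<inter> ((\<lambda>x. t i + x) ` Dnm n m) \<noteq> {})))
       \<and> (\<forall>n :: nat. 0 < n \<longrightarrow>
            (\<exists>(A0 :: (real \<times> real) set) (t :: nat \<Rightarrow> real \<times> real).
               topological_disk A0 \<and> t 0 = 0 \<and>
               (\<forall>i\<le>n. \<forall>j\<le>n. i \<noteq> j \<longrightarrow>
                  interior ((\<lambda>x. t i + x) ` A0) \<inter> interior ((\<lambda>x. t j + x) ` A0) = {}) \<and>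
               (\<forall>i\<in>{1..n}. A0 \<inter> ((\<lambda>x. t i + x) ` A0) \<noteq> {})))"
proof (intro conjI allI impI)
  fix n m :: nat
  assume "2 \<le> n" "n \<le> m"
  then show "\<exists>t :: nat \<Rightarrow> real \<times> real.
      (\<forall>i\<le>n. \<forall>j\<le>n. i \<noteq> j \<longrightarrow>
         interior ((\<lambda>x. t i + x) ` Dnm n m) \<inter> interior ((\<lambda>x. t j + x) ` Dnm n m) = {}) \<and>
      (\<forall>i\<in>{1..n}. ((\<lambda>x. t 0 + x) ` Dnm n m) \<inter> ((\<lambda>x. t i + x) ` Dnm n m) \<noteq> {})"
    using interior_translations_Dnm_disjoint[of _ n _ n m] Dnm_touches_translation[of _ n n m]
    by (intro exI[of _ "translation n m n"]) auto
next
  fix n :: nat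
  assume "0 < n"
  then show "\<exists>(A0 :: (real \<times> real) set) (t :: nat \<Rightarrow> real \<times> real).
      topological_disk A0 \<and> t 0 = 0 \<and>
      (\<forall>i\<le>n. \<forall>j\<le>n. i \<noteq> j \<longrightarrow>
         interior ((\<lambda>x. t i + x) ` A0) \<inter> interior ((\<lambda>x. t j + x) ` A0) = {}) \<and>
      (\<forall>i\<in>{1..n}. A0 \<inter> ((\<lambda>x. t i + x) ` A0) \<noteq> {})"
    using band_topological_disk[of "n + 1" n] interior_translations_band_disjoint[of _ n _ "n + 1" "n + 1"]
      band_touches_translation[of _ n "n + 1" "n + 1"]
    by (intro exI[of _ "band n (n + 1)"] exI[of _ "translation n (n + 1) (n + 1)"]) auto
qed

end
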